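(* Let $\Pi=\{\Pi_\theta\}$ be a partition of a set of paths into pairwise disjoint cells and let $\Theta=\{\theta_0,\dots,\theta_{M-1}\}$ be a set of filling classes $\theta_l=(Z_{\theta_l},\Pi_{\theta_l})$ for cells of $\Pi$, totally ordered by some order. Let $Z_\Theta=\bigcup_l Z_{\theta_l}$, where each PGT $\gamma$ has duration $E_\gamma>0$, minimum separation $t^{\mathrm{minsep}}_\gamma\ge0$ and positive integer minimal allocation $\mathcal{M}_\gamma$. Then for every $t_0$ there exists a valid schedule containing exactly $\mathcal{M}_\gamma$ PGAs of every $\gamma\in Z_\Theta$, all of whose PGAs lie within $[t_0,\,t_0+\tilde{\mathcal{R}}(Z_\Theta)]$, where $$\tilde{\mathcal{R}}(Z_\Theta)=\sum_{\theta_l\in\Theta}R(Z_{\theta_l}).$$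
   Context: A filling class is $\phi=(Z_\phi,\Pi_\phi)$ where $\Pi_\phi$ is a cell of the path partition and $Z_\phi$ is a set of PGTs $\gamma$ with paths $\pi_\gamma\in\Pi_\phi$. For a set of PGTs $Z_\phi=\{\gamma_0,\dots,\gamma_{M-1}\}$ indexed so that $\mathcal{M}_{\gamma_0}\le\dots\le\mathcal{M}_{\gamma_{M-1}}$, with $E_x=E_{\gamma_x}$, $\tau_x=t^{\mathrm{minsep}}_{\gamma_x}$: $n_0=\mathcal{M}_{\gamma_0}-1$, $n_x=\mathcal{M}_{\gamma_x}-\mathcal{M}_{\gamma_{x-1}}$ ($x\ge1$), $c_x=\max(\max_{y\ge x}(E_y+\tau_y),\sum_{y=x}^{M-1}E_y)$, and $R(Z_\phi)=\sum_{x=0}^{M-1}(n_xc_x+E_x)$ ($R(\emptyset)=0$). A PGA of $\gamma$ is a time interval $[s,s+E_\gamma)$ assigned to $\gamma$; a schedule is a finite set of PGAs. A resource conflict occurs if there are PGAs $[s,e)$ of $\gamma$ and $[s',e')$ of $\gamma'$ (distinct PGAs) with $\xi(\pi_\gamma)\cap\xi(\pi_{\gamma'})\ne\emptyset$ and $s\le s'<e$, where $\xi(\pi)$ is the set of vertices on path $\pi$. A minsep violation occurs if two time-consecutive PGAs $[s,e)$, $[s'',e'')$ of the same PGT $\gamma$ satisfy $s''-e<t^{\mathrm{minsep}}_\gamma$. A schedule is valid if no resource conflict and no minsep violation occurs. *)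

theory Defs
  imports Complex_Main
begin

text \<open>A PGT gamma has path path gamma, duration E gamma, minimum separation tau gamma
  and minimal allocation Mc gamma.  xi p is the vertex set of path p.
  A PGA is a pair (gamma, s) standing for the interval [s, s + E gamma).
  A schedule is a finite set of PGAs.\<close>

text \<open>R of a list xs of PGTs, assumed sorted by Mc (index x ranges over 0..<length xs).\<close>
definition R_list :: "('g \<Rightarrow> nat) \<Rightarrow> ('g \<Rightarrow> real) \<Rightarrow> ('g \<Rightarrow> real) \<Rightarrow> 'g list \<Rightarrow> real" where
  "R_list Mc E tau xs =
     (let L = length xs;
          n = (\<lambda>x. if x = 0 then real (Mc (xs ! 0)) - 1
                   else real (Mc (xs ! x)) - real (Mc (xs ! (x - 1))));
          c = (\<lambda>x. max (Max ((\<lambda>y. E (xs ! y) + tau (xs ! y)) ` {x..<L}))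
                        (\<Sum>y = x..<L. E (xs ! y)))
      in (\<Sum>x<L. n x * c x + E (xs ! x)))"

text \<open>R(Z): take an enumeration of the finite set Z ordered nondecreasingly by Mc
  (the value does not depend on how ties are broken); R of the empty set is 0.\<close>
definition R_set :: "('g \<Rightarrow> nat) \<Rightarrow> ('g \<Rightarrow> real) \<Rightarrow> ('g \<Rightarrow> real) \<Rightarrow> 'g set \<Rightarrow> real" where
  "R_set Mc E tau Z =
     R_list Mc E tau (SOME xs. distinct xs \<and> set xs = Z \<and> sorted (map Mc xs))"

definition resource_conflict ::
  "('p \<Rightarrow> 'v set) \<Rightarrow> ('g \<Rightarrow> 'p) \<Rightarrow> ('g \<Rightarrow> real) \<Rightarrow> ('g \<times> real) set \<Rightarrow> bool" where
  "resource_conflict xi path E S \<longleftrightarrow>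
     (\<exists>g s g' s'. (g, s) \<in> S \<and> (g', s') \<in> S \<and> (g, s) \<noteq> (g', s') \<and>
        xi (path g) \<inter> xi (path g') \<noteq> {} \<and> s \<le> s' \<and> s' < s + E g)"

definition minsep_violation ::
  "('g \<Rightarrow> real) \<Rightarrow> ('g \<Rightarrow> real) \<Rightarrow> ('g \<times> real) set \<Rightarrow> bool" where
  "minsep_violation E tau S \<longleftrightarrow>
     (\<exists>g s s''. (g, s) \<in> S \<and> (g, s'') \<in> S \<and> s < s'' \<and>
        \<not> (\<exists>s'. (g, s') \<in> S \<and> s < s' \<and> s' < s'') \<and>
        s'' - (s + E g) < tau g)"

definition valid_schedule ::
  "('p \<Rightarrow> 'v set) \<Rightarrow> ('g \<Rightarrow> 'p) \<Rightarrow> ('g \<Rightarrow> real) \<Rightarrow> ('g \<Rightarrow> real) \<Rightarrow> ('g \<times> real) set \<Rightarrow> bool" where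
  "valid_schedule xi path E tau S \<longleftrightarrow>
     finite S \<and> \<not> resource_conflict xi path E S \<and> \<not> minsep_violation E tau S"

end

theory Submission
  imports Defs
begin

(* Sort a filling class Z by allocation and schedule it in rounds.  A round lays the PGTs
   that still need PGAs back to back and is padded to the length c_x, long enough both for
   all of them and for the minimum separation of each; there are n_x rounds in which exactly
   the PGTs x, x+1, ... are active, and a PGT's last PGA needs no padding, which adds up to
   R(Z).  Recursively: while the first PGT still needs several PGAs, run one round and recurse
   with every allocation lowered by one; once it needs exactly one, schedule the others and
   append that PGA at the end.  The filling classes are then run one after another.  In the
   resulting schedule no two PGAs overlap in time at all, so no resource conflict can occur,
   whatever the paths and the partition are. *)

definition rounds_at :: "('g \<Rightarrow> nat) \<Rightarrow> 'g list \<Rightarrow> nat \<Rightarrow> real" where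
  "rounds_at m xs x =
     (if x = 0 then real (m (xs ! 0)) - 1 else real (m (xs ! x)) - real (m (xs ! (x - 1))))"

definition round_length :: "('g \<Rightarrow> real) \<Rightarrow> ('g \<Rightarrow> real) \<Rightarrow> 'g list \<Rightarrow> real" where
  "round_length E tau xs = max (Max ((\<lambda>g. E g + tau g) ` set xs)) (sum_list (map E xs))"

lemma drop_eq_map_nth: "drop x xs = map ((!) xs) [x..<length xs]"
  by (metis drop_map drop_upt map_nth add_0)

lemma R_list_eq:
  "R_list m E tau xs =
     (\<Sum>x<length xs. rounds_at m xs x * round_length E tau (drop x xs) + E (xs ! x))"
  unfolding R_list_def rounds_at_def round_length_def Let_def
  by (simp add: drop_eq_map_nth sum_list_distinct_conv_sum_set image_image)

lemma E_plus_tau_le_round_length: "g \<in> set xs \<Longrightarrow> E g + tau g \<le> round_length E tau xs"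
  unfolding round_length_def by (intro max.coboundedI1 Max_ge) auto

lemma sum_list_le_round_length: "sum_list (map E xs) \<le> round_length E tau xs"
  unfolding round_length_def by simp

lemma R_list_Cons_single:
  assumes "m x = 1"
  shows "R_list m E tau (x # xs) = E x + R_list m E tau xs"
proof -
  have "rounds_at m (x # xs) (Suc i) = rounds_at m xs i" for i
    using assms by (simp add: rounds_at_def)
  moreover have "rounds_at m (x # xs) 0 = 0"
    using assms by (simp add: rounds_at_def)
  ultimately show ?thesis
    unfolding R_list_eq length_Cons sum.lessThan_Suc_shift by simp
qed

lemma R_list_decrement:
  assumes "xs \<noteq> []" and "\<forall>g\<in>set xs. 1 \<le> m g"
  shows "R_list m E tau xs = round_length E tau xs + R_list (\<lambda>g. m g - 1) E tau xs"
proof -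
  have "rounds_at m xs x = rounds_at (\<lambda>g. m g - 1) xs x + (if x = 0 then 1 else 0)"
    if "x < length xs" for x
    using assms that by (auto simp: rounds_at_def)
  then have "R_list m E tau xs = R_list (\<lambda>g. m g - 1) E tau xs
      + (\<Sum>x<length xs. if x = 0 then round_length E tau (drop x xs) else 0)"
    unfolding R_list_eq sum.distrib[symmetric] by (intro sum.cong) (auto simp: algebra_simps)
  then show ?thesis
    using assms(1) by simp
qed

lemma sum_list_le_R_list:
  assumes "sorted (map m xs)" and "\<forall>g\<in>set xs. 0 < m g \<and> 0 \<le> E g"
  shows "sum_list (map E xs) \<le> R_list m E tau xs"
proof -
  have "0 \<le> rounds_at m xs x * round_length E tau (drop x xs)" if "x < length xs" for x
  proof (intro mult_nonneg_nonneg)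
    have "m (xs ! (x - 1)) \<le> m (xs ! x)"
      using sorted_nth_mono[OF assms(1), of "x - 1" x] that by simp
    then show "0 \<le> rounds_at m xs x"
      using assms that by (auto simp: rounds_at_def Suc_le_eq)
    have "0 \<le> sum_list (map E (drop x xs))"
      using assms(2) by (intro sum_list_nonneg) (auto dest: in_set_dropD)
    then show "0 \<le> round_length E tau (drop x xs)"
      using sum_list_le_round_length order_trans by blast
  qed
  then have "(\<Sum>x<length xs. E (xs ! x)) \<le> R_list m E tau xs"
    unfolding R_list_eq by (intro sum_mono) auto
  then show ?thesis
    by (simp add: sum_list_sum_nth atLeast0LessThan)
qed

abbreviation starts :: "('g \<times> real) set \<Rightarrow> 'g \<Rightarrow> real set" where
  "starts S g \<equiv> {s. (g, s) \<in> S}"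

definition non_overlapping :: "('g \<Rightarrow> real) \<Rightarrow> ('g \<times> real) set \<Rightarrow> bool" where
  "non_overlapping E S \<longleftrightarrow>
     (\<forall>g s g' s'. (g, s) \<in> S \<longrightarrow> (g', s') \<in> S \<longrightarrow> (g, s) \<noteq> (g', s')
        \<longrightarrow> s + E g \<le> s' \<or> s' + E g' \<le> s)"

definition separated :: "('g \<Rightarrow> real) \<Rightarrow> ('g \<Rightarrow> real) \<Rightarrow> ('g \<times> real) set \<Rightarrow> bool" where
  "separated E tau S \<longleftrightarrow>
     (\<forall>g s s'. (g, s) \<in> S \<longrightarrow> (g, s') \<in> S \<longrightarrow> s < s' \<longrightarrow> s + E g + tau g \<le> s')"

definition serial_schedule :: "('g \<Rightarrow> real) \<Rightarrow> ('g \<Rightarrow> real) \<Rightarrow> ('g \<times> real) set \<Rightarrow> bool" where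
  "serial_schedule E tau S \<longleftrightarrow> finite S \<and> non_overlapping E S \<and> separated E tau S"

lemma valid_schedule_if_serial:
  assumes "serial_schedule E tau S" and "\<forall>(g, s)\<in>S. 0 < E g"
  shows "valid_schedule xi path E tau S"
proof -
  have "\<not> resource_conflict xi path E S"
  proof
    assume "resource_conflict xi path E S"
    then obtain g s g' s' where "(g, s) \<in> S" "(g', s') \<in> S" "(g, s) \<noteq> (g', s')"
      and "s \<le> s'" "s' < s + E g"
      unfolding resource_conflict_def by blast
    with assms show False
      unfolding serial_schedule_def non_overlapping_def by fastforce
  qed
  moreover have "\<not> minsep_violation E tau S"
    using assms unfolding serial_schedule_def separated_def minsep_violation_def by fastforce
  ultimately show ?thesis
    using assms unfolding serial_schedule_def valid_schedule_def by blast
qed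

lemma serial_schedule_empty: "serial_schedule E tau {}"
  by (simp add: serial_schedule_def non_overlapping_def separated_def)

lemma serial_schedule_singleton: "serial_schedule E tau {p}"
  by (auto simp add: serial_schedule_def non_overlapping_def separated_def)

lemma serial_schedule_subset:
  "serial_schedule E tau S \<Longrightarrow> S' \<subseteq> S \<Longrightarrow> serial_schedule E tau S'"
  unfolding serial_schedule_def non_overlapping_def separated_def by (meson finite_subset subsetD)

definition precedes ::
  "('g \<Rightarrow> real) \<Rightarrow> ('g \<Rightarrow> real) \<Rightarrow> ('g \<times> real) set \<Rightarrow> ('g \<times> real) set \<Rightarrow> bool" where
  "precedes E tau S1 S2 \<longleftrightarrow>
     (\<forall>(g, s)\<in>S1. \<forall>(g', s')\<in>S2. s + E g \<le> s' \<and> (g = g' \<longrightarrow> s + E g + tau g \<le> s'))"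

lemma serial_schedule_Un:
  assumes "serial_schedule E tau S1" "serial_schedule E tau S2" "precedes E tau S1 S2"
    and "\<forall>(g, s)\<in>S1. 0 < E g"
  shows "serial_schedule E tau (S1 \<union> S2)"
proof -
  have "non_overlapping E (S1 \<union> S2)"
    using assms unfolding serial_schedule_def non_overlapping_def precedes_def by fast
  moreover have "separated E tau (S1 \<union> S2)"
    using assms unfolding serial_schedule_def separated_def precedes_def by fastforce
  ultimately show ?thesis
    using assms unfolding serial_schedule_def by blast
qed

lemma finite_starts: "finite S \<Longrightarrow> finite (starts S g)"
  by (rule finite_subset[of _ "snd ` S"]) (auto intro: rev_image_eqI)

lemma card_starts_Un:
  assumes "finite S1" "finite S2" "precedes E tau S1 S2" "\<forall>(g, s)\<in>S1. 0 < E g"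
  shows "card (starts (S1 \<union> S2) g) = card (starts S1 g) + card (starts S2 g)"
proof -
  have "starts S1 g \<inter> starts S2 g = {}"
    using assms(3,4) unfolding precedes_def by fastforce
  moreover have "starts (S1 \<union> S2) g = starts S1 g \<union> starts S2 g"
    by blast
  ultimately show ?thesis
    using assms(1,2) by (simp add: card_Un_disjoint finite_starts)
qed

definition shift_schedule :: "real \<Rightarrow> ('g \<times> real) set \<Rightarrow> ('g \<times> real) set" where
  "shift_schedule c S = (\<lambda>(g, s). (g, s + c)) ` S"

lemma mem_shift_schedule: "(g, s) \<in> shift_schedule c S \<longleftrightarrow> (g, s - c) \<in> S"
  unfolding shift_schedule_def by (force simp: image_iff)

lemma ball_shift_schedule:
  "(\<forall>(g, s)\<in>shift_schedule c S. P g s) \<longleftrightarrow> (\<forall>(g, s)\<in>S. P g (s + c))"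
  unfolding shift_schedule_def by auto

lemma fst_shift_schedule [simp]: "fst ` shift_schedule c S = fst ` S"
  unfolding shift_schedule_def by force

lemma card_starts_shift_schedule [simp]: "card (starts (shift_schedule c S) g) = card (starts S g)"
proof -
  have "starts (shift_schedule c S) g = (\<lambda>s. s + c) ` starts S g"
    by (force simp: image_iff mem_shift_schedule)
  then show ?thesis
    by (simp add: card_image)
qed

lemma serial_schedule_shift:
  "serial_schedule E tau S \<Longrightarrow> serial_schedule E tau (shift_schedule c S)"
  unfolding serial_schedule_def non_overlapping_def separated_def
  by (fastforce simp: shift_schedule_def)

(* The head of the list gets the last slot of the round, so that adding a new head leaves the
   slots of all other PGTs unchanged. *)
fun round_start :: "('g \<Rightarrow> real) \<Rightarrow> 'g list \<Rightarrow> 'g \<Rightarrow> real" where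
  "round_start E [] g = 0"
| "round_start E (x # xs) g = (if g = x then sum_list (map E xs) else round_start E xs g)"

lemma round_start_nonneg: "\<forall>y\<in>set xs. 0 \<le> E y \<Longrightarrow> 0 \<le> round_start E xs g"
  by (induction xs) (auto intro!: sum_list_nonneg)

lemma round_start_add_le:
  "\<forall>y\<in>set xs. 0 \<le> E y \<Longrightarrow> g \<in> set xs \<Longrightarrow> round_start E xs g + E g \<le> sum_list (map E xs)"
  by (induction xs) (auto intro: sum_list_nonneg add_increasing)

lemma round_start_disjoint:
  "distinct xs \<Longrightarrow> \<forall>y\<in>set xs. 0 \<le> E y \<Longrightarrow> g \<in> set xs \<Longrightarrow> g' \<in> set xs \<Longrightarrow> g \<noteq> g'
   \<Longrightarrow> round_start E xs g + E g \<le> round_start E xs g'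
     \<or> round_start E xs g' + E g' \<le> round_start E xs g"
  by (induction xs) (auto dest: round_start_add_le)

definition round_schedule :: "('g \<Rightarrow> real) \<Rightarrow> 'g list \<Rightarrow> ('g \<times> real) set" where
  "round_schedule E xs = (\<lambda>g. (g, round_start E xs g)) ` set xs"

lemma serial_schedule_round:
  assumes "distinct xs" "\<forall>y\<in>set xs. 0 \<le> E y"
  shows "serial_schedule E tau (round_schedule E xs)"
  using round_start_disjoint[OF assms]
  unfolding serial_schedule_def non_overlapping_def separated_def round_schedule_def by auto

definition schedules_within ::
  "('g \<Rightarrow> real) \<Rightarrow> ('g \<Rightarrow> real) \<Rightarrow> ('g \<Rightarrow> nat) \<Rightarrow> 'g set \<Rightarrow> real \<Rightarrow> ('g \<times> real) set \<Rightarrow> bool" where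
  "schedules_within E tau m Z T S \<longleftrightarrow>
     serial_schedule E tau S \<and> fst ` S \<subseteq> Z \<and> (\<forall>g\<in>Z. card (starts S g) = m g)
     \<and> (\<forall>(g, s)\<in>S. 0 \<le> s \<and> s + E g \<le> T)"

(* The lower bound round_start is what allows a further round to be prepended: each later PGA
   of g then starts at least one round length after g's slot in the new round. *)
definition list_schedule ::
  "('g \<Rightarrow> real) \<Rightarrow> ('g \<Rightarrow> real) \<Rightarrow> ('g \<Rightarrow> nat) \<Rightarrow> 'g list \<Rightarrow> ('g \<times> real) set \<Rightarrow> bool" where
  "list_schedule E tau m xs S \<longleftrightarrow>
     schedules_within E tau m (set xs) (R_list m E tau xs) S
     \<and> (\<forall>(g, s)\<in>S. round_start E xs g \<le> s)"

lemma list_schedule_Nil: "list_schedule E tau m [] {}"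
  by (simp add: list_schedule_def schedules_within_def serial_schedule_empty)

lemma list_scheduleI:
  assumes "serial_schedule E tau S" "fst ` S \<subseteq> set xs" "\<forall>g\<in>set xs. card (starts S g) = m g"
    and "\<forall>(g, s)\<in>S. round_start E xs g \<le> s \<and> s + E g \<le> R_list m E tau xs"
    and "\<forall>g\<in>set xs. 0 \<le> E g"
  shows "list_schedule E tau m xs S"
proof -
  have "0 \<le> s" if "(g, s) \<in> S" for g s
    using round_start_nonneg[OF assms(5), of g] assms(4) that by fastforce
  then show ?thesis
    using assms(1-4) unfolding list_schedule_def schedules_within_def by fast
qed

lemma list_schedule_Cons_single:
  assumes S: "list_schedule E tau m xs S"
    and x: "m x = 1" "x \<notin> set xs" "0 < E x"
    and xs: "sorted (map m xs)" "\<forall>g\<in>set xs. 0 < m g \<and> 0 < E g"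
  shows "list_schedule E tau m (x # xs) (S \<union> {(x, R_list m E tau xs)})"
proof -
  let ?R = "R_list m E tau xs"
  have serial: "serial_schedule E tau S" and fst: "fst ` S \<subseteq> set xs"
    and card: "\<forall>g\<in>set xs. card (starts S g) = m g"
    and bounds: "\<forall>(g, s)\<in>S. round_start E xs g \<le> s \<and> s + E g \<le> ?R"
    using S unfolding list_schedule_def schedules_within_def by auto
  have E_pos: "\<forall>(g, s)\<in>S. 0 < E g"
    using fst xs(2) by auto
  have prec: "precedes E tau S {(x, ?R)}"
    using bounds fst x(2) unfolding precedes_def by auto
  have sum_le: "sum_list (map E xs) \<le> ?R"
    using xs by (intro sum_list_le_R_list) auto
  show ?thesis
  proof (rule list_scheduleI)
    show "serial_schedule E tau (S \<union> {(x, ?R)})"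
      using serial prec E_pos by (intro serial_schedule_Un serial_schedule_singleton)
    show "fst ` (S \<union> {(x, ?R)}) \<subseteq> set (x # xs)"
      using fst by auto
    have "starts S x = {}"
      using fst x(2) by (auto intro: rev_image_eqI)
    then show "\<forall>g\<in>set (x # xs). card (starts (S \<union> {(x, ?R)}) g) = m g"
      using card card_starts_Un[OF _ _ prec E_pos] serial x(1,2)
      by (auto simp: serial_schedule_def)
    show "\<forall>(g, s)\<in>S \<union> {(x, ?R)}. round_start E (x # xs) g \<le> s \<and> s + E g \<le> R_list m E tau (x # xs)"
    proof clarify
      fix g s assume gs: "(g, s) \<in> S \<union> {(x, ?R)}"
      show "round_start E (x # xs) g \<le> s \<and> s + E g \<le> R_list m E tau (x # xs)"
      proof (cases "(g, s) \<in> S")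
        case True
        then have "g \<noteq> x"
          using fst x(2) by force
        with True bounds x show ?thesis
          by (fastforce simp: R_list_Cons_single)
      next
        case False
        with gs sum_le x show ?thesis
          by (simp add: R_list_Cons_single)
      qed
    qed
    show "\<forall>g\<in>set (x # xs). 0 \<le> E g"
      using x(3) xs(2) by auto
  qed
qed

lemma sorted_map_decrement: "sorted (map m xs) \<Longrightarrow> sorted (map (\<lambda>g. m g - 1) xs)"
  for m :: "'a \<Rightarrow> nat"
  unfolding sorted_map by (erule sorted_wrt_mono_rel[rotated]) (rule diff_le_mono)

lemma list_schedule_add_round:
  assumes S: "list_schedule E tau (\<lambda>g. m g - 1) xs S"
    and xs: "xs \<noteq> []" "distinct xs" "sorted (map m xs)"
    and pos: "\<forall>g\<in>set xs. 1 < m g \<and> 0 < E g \<and> 0 \<le> tau g"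
  shows "list_schedule E tau m xs (round_schedule E xs \<union> shift_schedule (round_length E tau xs) S)"
proof -
  let ?c = "round_length E tau xs"
  let ?R' = "R_list (\<lambda>g. m g - 1) E tau xs"
  let ?round = "round_schedule E xs"
  have serial: "serial_schedule E tau S" and fst: "fst ` S \<subseteq> set xs"
    and card: "\<forall>g\<in>set xs. card (starts S g) = m g - 1"
    and bounds: "\<forall>(g, s)\<in>S. round_start E xs g \<le> s \<and> s + E g \<le> ?R'"
    using S unfolding list_schedule_def schedules_within_def by auto
  have E_nonneg: "\<forall>g\<in>set xs. 0 \<le> E g"
    using pos by auto
  have R: "R_list m E tau xs = ?c + ?R'"
    using xs(1) pos by (intro R_list_decrement) auto
  have "sorted (map (\<lambda>g. m g - 1) xs)"
    using xs(3) by (rule sorted_map_decrement)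
  then have "sum_list (map E xs) \<le> ?R'"
    using pos by (intro sum_list_le_R_list) auto
  then have R'_nonneg: "0 \<le> ?R'"
    using sum_list_nonneg[of "map E xs"] E_nonneg by fastforce
  have slot_end: "round_start E xs g + E g \<le> ?c" if "g \<in> set xs" for g
    using round_start_add_le[OF E_nonneg that] sum_list_le_round_length[of E xs tau] by linarith
  have start_nonneg: "0 \<le> round_start E xs g" for g
    using round_start_nonneg[OF E_nonneg] .
  have prec: "precedes E tau ?round (shift_schedule ?c S)"
    unfolding precedes_def round_schedule_def ball_shift_schedule
  proof (intro ballI, clarify)
    fix g g' s' assume g: "g \<in> set xs" and "(g', s') \<in> S"
    then have "round_start E xs g' \<le> s'"
      using bounds by blast
    then show "round_start E xs g + E g \<le> s' + ?c
      \<and> (g = g' \<longrightarrow> round_start E xs g + E g + tau g \<le> s' + ?c)"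
      using slot_end[OF g] E_plus_tau_le_round_length[OF g, of E tau] start_nonneg[of g'] by auto
  qed
  have E_pos: "\<forall>(g, s)\<in>?round. 0 < E g"
    using pos by (auto simp: round_schedule_def)
  have "serial_schedule E tau (?round \<union> shift_schedule ?c S)"
    using serial_schedule_round[OF xs(2) E_nonneg] serial_schedule_shift[OF serial] prec E_pos
    by (rule serial_schedule_Un)
  moreover have "card (starts (?round \<union> shift_schedule ?c S) g) = m g" if "g \<in> set xs" for g
  proof -
    have "finite ?round" "finite (shift_schedule ?c S)"
      using serial by (simp_all add: round_schedule_def shift_schedule_def serial_schedule_def)
    then have "card (starts (?round \<union> shift_schedule ?c S) g)
        = card (starts ?round g) + card (starts (shift_schedule ?c S) g)"
      using prec E_pos by (rule card_starts_Un)
    also have "starts ?round g = {round_start E xs g}"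
      using that by (auto simp: round_schedule_def)
    also have "card (starts (shift_schedule ?c S) g) = m g - 1"
      using card that by simp
    finally show ?thesis
      using that pos by auto
  qed
  moreover have "round_start E xs g \<le> s \<and> s + E g \<le> R_list m E tau xs"
    if "(g, s) \<in> ?round \<union> shift_schedule ?c S" for g s
    using that
  proof
    assume "(g, s) \<in> ?round"
    then have "g \<in> set xs" "s = round_start E xs g"
      by (auto simp: round_schedule_def)
    then show ?thesis
      using slot_end[of g] R R'_nonneg by auto
  next
    assume "(g, s) \<in> shift_schedule ?c S"
    then have "round_start E xs g \<le> s - ?c" "s - ?c + E g \<le> ?R'"
      using bounds by (auto simp: mem_shift_schedule)
    moreover have "0 \<le> ?c"
      using sum_list_le_round_length[of E xs tau] sum_list_nonneg[of "map E xs"] E_nonneg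
      by fastforce
    ultimately show ?thesis
      using R by linarith
  qed
  moreover have "fst ` (?round \<union> shift_schedule ?c S) \<subseteq> set xs"
    using fst unfolding image_Un fst_shift_schedule by (auto simp: round_schedule_def)
  ultimately show ?thesis
    using E_nonneg by (intro list_scheduleI) auto
qed

lemma list_schedule_exists:
  "distinct xs \<Longrightarrow> sorted (map m xs) \<Longrightarrow> \<forall>g\<in>set xs. 0 < m g \<and> 0 < E g \<and> 0 \<le> tau g
   \<Longrightarrow> \<exists>S. list_schedule E tau m xs S"
proof (induction xs arbitrary: m)
  case Nil
  show ?case
    using list_schedule_Nil by blast
next
  case (Cons x xs)
  have "\<exists>S. list_schedule E tau m (x # xs) S"
    if "m x = Suc k" "sorted (map m (x # xs))" "\<forall>g\<in>set (x # xs). 0 < m g \<and> 0 < E g \<and> 0 \<le> tau g"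
    for k m
    using that
  proof (induction k arbitrary: m)
    case 0
    then obtain S where "list_schedule E tau m xs S"
      using Cons.IH[of m] Cons.prems(1) by auto
    then have "list_schedule E tau m (x # xs) (S \<union> {(x, R_list m E tau xs)})"
      using 0 Cons.prems(1) by (intro list_schedule_Cons_single) auto
    then show ?case ..
  next
    case (Suc k)
    have "sorted (map (\<lambda>g. m g - 1) (x # xs))"
      using Suc.prems(2) by (rule sorted_map_decrement)
    moreover have "\<forall>g\<in>set (x # xs). 1 < m g"
      using Suc.prems(1,2) by auto
    ultimately obtain S where "list_schedule E tau (\<lambda>g. m g - 1) (x # xs) S"
      using Suc.IH[of "\<lambda>g. m g - 1"] Suc.prems by force
    then have "list_schedule E tau m (x # xs)
        (round_schedule E (x # xs) \<union> shift_schedule (round_length E tau (x # xs)) S)"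
      using Suc.prems \<open>\<forall>g\<in>set (x # xs). 1 < m g\<close> Cons.prems(1)
      by (intro list_schedule_add_round) auto
    then show ?case ..
  qed
  moreover have "m x = Suc (m x - 1)"
    using Cons.prems(3) by simp
  ultimately show ?case
    using Cons.prems(2,3) by blast
qed

lemma R_set_sorted_enumeration:
  assumes "finite Z"
  obtains xs where "distinct xs" "set xs = Z" "sorted (map m xs)"
    and "R_set m E tau Z = R_list m E tau xs"
proof -
  obtain ys where "distinct ys" "set ys = Z"
    using finite_distinct_list[OF assms] by blast
  then have "\<exists>xs. distinct xs \<and> set xs = Z \<and> sorted (map m xs)"
    by (intro exI[of _ "sort_key m ys"]) simp
  from someI_ex[OF this] show ?thesis
    by (intro that[of "SOME xs. distinct xs \<and> set xs = Z \<and> sorted (map m xs)"])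
      (auto simp: R_set_def)
qed

lemma R_set_nonneg:
  assumes "finite Z" "\<forall>g\<in>Z. 0 < m g \<and> 0 \<le> E g"
  shows "0 \<le> R_set m E tau Z"
proof -
  obtain xs where xs: "set xs = Z" "sorted (map m xs)" "R_set m E tau Z = R_list m E tau xs"
    using R_set_sorted_enumeration[OF assms(1)] by metis
  have "0 \<le> sum_list (map E xs)"
    using assms(2) xs(1) by (intro sum_list_nonneg) auto
  also have "\<dots> \<le> R_list m E tau xs"
    using assms(2) xs(1,2) by (intro sum_list_le_R_list) auto
  finally show ?thesis
    using xs(3) by simp
qed

lemma set_schedule_exists:
  assumes "finite Z" "\<forall>g\<in>Z. 0 < m g \<and> 0 < E g \<and> 0 \<le> tau g"
  shows "\<exists>S. schedules_within E tau m Z (R_set m E tau Z) S"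
proof -
  obtain xs where xs: "distinct xs" "set xs = Z" "sorted (map m xs)"
    and R: "R_set m E tau Z = R_list m E tau xs"
    using R_set_sorted_enumeration[OF assms(1)] by metis
  then obtain S where "list_schedule E tau m xs S"
    using list_schedule_exists[OF xs(1,3)] assms(2) by blast
  then show ?thesis
    unfolding list_schedule_def xs(2) R by blast
qed

lemma schedules_within_restrict:
  "schedules_within E tau m Z T S \<Longrightarrow> schedules_within E tau m (Z - Y) T {p \<in> S. fst p \<notin> Y}"
  unfolding schedules_within_def by (auto intro: serial_schedule_subset)

lemma schedules_within_append:
  assumes S1: "schedules_within E tau m Z1 T1 S1" and S2: "schedules_within E tau m Z2 T2 S2"
    and "Z1 \<inter> Z2 = {}" "\<forall>g\<in>Z1. 0 < E g" "0 \<le> T1" "0 \<le> T2"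
  shows "schedules_within E tau m (Z1 \<union> Z2) (T1 + T2) (S1 \<union> shift_schedule T1 S2)"
proof -
  have fst1: "fst ` S1 \<subseteq> Z1" and fst2: "fst ` S2 \<subseteq> Z2"
    using S1 S2 by (simp_all add: schedules_within_def)
  have bounds1: "\<forall>(g, s)\<in>S1. 0 \<le> s \<and> s + E g \<le> T1"
    and bounds2: "\<forall>(g, s)\<in>S2. 0 \<le> s \<and> s + E g \<le> T2"
    using S1 S2 by (simp_all add: schedules_within_def)
  have in_Z1: "g \<in> Z1" if "(g, s) \<in> S1" for g s
    using fst1 that by force
  have in_Z2: "g \<in> Z2" if "(g, s) \<in> S2" for g s
    using fst2 that by force
  have E_pos: "\<forall>(g, s)\<in>S1. 0 < E g"
    using assms(4) in_Z1 by blast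
  have prec: "precedes E tau S1 (shift_schedule T1 S2)"
    unfolding precedes_def ball_shift_schedule
    using bounds1 bounds2 in_Z1 in_Z2 assms(3) by fastforce
  have serial: "serial_schedule E tau S1" "serial_schedule E tau S2"
    using S1 S2 by (simp_all add: schedules_within_def)
  then have fin: "finite S1" "finite (shift_schedule T1 S2)"
    by (simp_all add: serial_schedule_def shift_schedule_def)
  have "starts S2 g = {}" if "g \<in> Z1" for g
    using that in_Z2 assms(3) by blast
  moreover have "starts S1 g = {}" if "g \<in> Z2" for g
    using that in_Z1 assms(3) by blast
  ultimately have "\<forall>g\<in>Z1 \<union> Z2. card (starts (S1 \<union> shift_schedule T1 S2) g) = m g"
    using card_starts_Un[OF fin prec E_pos] S1 S2 by (auto simp: schedules_within_def)
  moreover have "serial_schedule E tau (S1 \<union> shift_schedule T1 S2)"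
    using serial(1) serial_schedule_shift[OF serial(2)] prec E_pos by (rule serial_schedule_Un)
  moreover have "\<forall>(g, s)\<in>S1 \<union> shift_schedule T1 S2. 0 \<le> s \<and> s + E g \<le> T1 + T2"
    unfolding ball_Un ball_shift_schedule using bounds1 bounds2 assms(5,6) by fastforce
  moreover have "fst ` (S1 \<union> shift_schedule T1 S2) \<subseteq> Z1 \<union> Z2"
    unfolding image_Un fst_shift_schedule using fst1 fst2 by blast
  ultimately show ?thesis
    unfolding schedules_within_def by blast
qed

lemma family_schedule_exists:
  fixes Z :: "'i \<Rightarrow> 'g set"
  assumes "finite I" "\<forall>i\<in>I. finite (Z i)" "\<forall>g\<in>(\<Union>i\<in>I. Z i). 0 < m g \<and> 0 < E g \<and> 0 \<le> tau g"
  shows "\<exists>S. schedules_within E tau m (\<Union>i\<in>I. Z i) (\<Sum>i\<in>I. R_set m E tau (Z i)) S"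
  using assms
proof (induction I rule: finite_induct)
  case empty
  show ?case
    by (auto simp: schedules_within_def serial_schedule_empty)
next
  case (insert i I)
  let ?U = "\<Union>i\<in>I. Z i"
  let ?T = "\<Sum>i\<in>I. R_set m E tau (Z i)"
  obtain S1 where "schedules_within E tau m ?U ?T S1"
    using insert by auto
  \<comment> \<open>a PGT lying in several classes is scheduled only with the class added last\<close>
  then have S1: "schedules_within E tau m (?U - Z i) ?T {p \<in> S1. fst p \<notin> Z i}"
    by (rule schedules_within_restrict)
  obtain S2 where S2: "schedules_within E tau m (Z i) (R_set m E tau (Z i)) S2"
    using set_schedule_exists insert.prems by (metis UN_insert UnCI insertCI)
  have R_nonneg: "0 \<le> R_set m E tau (Z j)" if "j \<in> insert i I" for j
  proof (rule R_set_nonneg)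
    show "finite (Z j)"
      using insert.prems(1) that by blast
    show "\<forall>g\<in>Z j. 0 < m g \<and> 0 \<le> E g"
      using insert.prems(2) that by (meson UN_I less_imp_le)
  qed
  then have "schedules_within E tau m ((?U - Z i) \<union> Z i) (?T + R_set m E tau (Z i))
      ({p \<in> S1. fst p \<notin> Z i} \<union> shift_schedule ?T S2)"
    using insert.prems(2)
    by (intro schedules_within_append[OF S1 S2] sum_nonneg) (auto simp del: Un_Diff_cancel2)
  moreover have "(?U - Z i) \<union> Z i = (\<Union>i\<in>insert i I. Z i)"
    by auto
  moreover have "?T + R_set m E tau (Z i) = (\<Sum>i\<in>insert i I. R_set m E tau (Z i))"
    using insert.hyps by simp
  ultimately show ?case
    by metis
qed

lemma valid_schedule_in_window:
  assumes S: "schedules_within E tau m Z T S" and E_pos: "\<forall>g\<in>Z. 0 < E g"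
  shows "\<exists>S'. valid_schedule xi path E tau S' \<and> fst ` S' \<subseteq> Z
    \<and> (\<forall>g\<in>Z. card (starts S' g) = m g) \<and> (\<forall>(g, s)\<in>S'. t0 \<le> s \<and> s + E g \<le> t0 + T)"
proof (intro exI[of _ "shift_schedule t0 S"] conjI)
  have fst_S: "fst ` S \<subseteq> Z" and bounds: "\<forall>(g, s)\<in>S. 0 \<le> s \<and> s + E g \<le> T"
    using S by (simp_all add: schedules_within_def)
  have "0 < E g" if "(g, s) \<in> S" for g s
    using fst_S that E_pos by (metis fst_conv image_eqI subsetD)
  then show "valid_schedule xi path E tau (shift_schedule t0 S)"
    using S by (intro valid_schedule_if_serial)
      (auto simp: schedules_within_def serial_schedule_shift ball_shift_schedule)
  show "fst ` shift_schedule t0 S \<subseteq> Z"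
    using fst_S by simp
  show "\<forall>g\<in>Z. card (starts (shift_schedule t0 S) g) = m g"
    using S by (simp add: schedules_within_def)
  show "\<forall>(g, s)\<in>shift_schedule t0 S. t0 \<le> s \<and> s + E g \<le> t0 + T"
    unfolding ball_shift_schedule using bounds by auto
qed

theorem mainTheorem5:
  fixes Part :: "'p set set"
    and Theta :: "('g set \<times> 'p set) set"
    and xi :: "'p \<Rightarrow> 'v set"
    and path :: "'g \<Rightarrow> 'p"
    and E tau :: "'g \<Rightarrow> real"
    and Mc :: "'g \<Rightarrow> nat"
    and t0 :: real
  assumes disj: "\<forall>C1\<in>Part. \<forall>C2\<in>Part. C1 \<noteq> C2 \<longrightarrow> C1 \<inter> C2 = {}"
    and finTheta: "finite Theta"
    and cell: "\<forall>(Z, C)\<in>Theta. C \<in> Part \<and> finite Z \<and> (\<forall>g\<in>Z. path g \<in> C)"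
    and E_pos: "\<forall>g\<in>(\<Union>(Z, C)\<in>Theta. Z). E g > 0"
    and tau_nonneg: "\<forall>g\<in>(\<Union>(Z, C)\<in>Theta. Z). tau g \<ge> 0"
    and Mc_pos: "\<forall>g\<in>(\<Union>(Z, C)\<in>Theta. Z). Mc g > 0"
  shows "\<exists>S. valid_schedule xi path E tau S
           \<and> fst ` S \<subseteq> (\<Union>(Z, C)\<in>Theta. Z)
           \<and> (\<forall>g\<in>(\<Union>(Z, C)\<in>Theta. Z). card {s. (g, s) \<in> S} = Mc g)
           \<and> (\<forall>(g, s)\<in>S. t0 \<le> s \<and>
                 s + E g \<le> t0 + (\<Sum>(Z, C)\<in>Theta. R_set Mc E tau Z))"
proof -
  let ?U = "\<Union>(Z, C)\<in>Theta. Z"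
  let ?T = "\<Sum>(Z, C)\<in>Theta. R_set Mc E tau Z"
  have "\<forall>i\<in>Theta. finite ((\<lambda>(Z, C). Z) i)"
    using cell by auto
  moreover have pos: "\<forall>g\<in>?U. 0 < Mc g \<and> 0 < E g \<and> 0 \<le> tau g"
    using E_pos tau_nonneg Mc_pos by blast
  ultimately obtain S
    where "schedules_within E tau Mc ?U (\<Sum>i\<in>Theta. R_set Mc E tau ((\<lambda>(Z, C). Z) i)) S"
    using family_schedule_exists[OF finTheta] by blast
  then have "schedules_within E tau Mc ?U ?T S"
    by (simp add: prod.case_distrib)
  then show ?thesis
    using pos by (intro valid_schedule_in_window) auto
qed

end
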